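(* Let $M$ be a model of a complete affine theory which has an elementary substructure $K\preccurlyeq M$ whose underlying metric space is compact. Let $D_1\subseteq D_2\subseteq\cdots$ be definable subsets of $M^n$. Then $D=\overline{\bigcup_nD_n}$ is definable.
   Context: Affine continuous logic: $L$-structures are complete metric spaces $(M,d)$ with $d\le1$ and Lipschitz interpretations of function symbols and $[0,1]$-valued relation symbols. Affine formulas are built from $1$ and atomic formulas (including $d$) using only $r\cdot\phi$ ($r\in\mathbb R$), $\phi+\psi$, $\inf_x$, $\sup_x$; $K\preccurlyeq M$ means every affine formula with parameters from $K$ has the same value in $K$ and $M$. A predicate $P:M^n\to\mathbb R$ is definable (without parameters) if it is a uniform limit on $M^n$ of $\phi_k^M$ for affine formulas $\phi_k$. A closed $D\subseteq M^n$ is definable if $\bar x\mapsto d(\bar x,D)=\inf_{\bar a\in D}d(\bar x,\bar a)$ is definable. $\overline{X}$ denotes topological closure. *)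

theory Defs
  imports "HOL-Analysis.Analysis"
begin

text \<open>A language is given by a type of function symbols 'f with an arity map
  and a type of relation symbols 'r with an arity map.  Variables are natural numbers.\<close>

datatype 'f trm = Var nat | Fn 'f "'f trm list"

datatype ('f, 'r) afm =
    One
  | Rel 'r "'f trm list"
  | Dst "'f trm" "'f trm"
  | Scale real "('f, 'r) afm"
  | Add "('f, 'r) afm" "('f, 'r) afm"
  | Inf_q nat "('f, 'r) afm"
  | Sup_q nat "('f, 'r) afm"

fun wf_trm :: "('f \<Rightarrow> nat) \<Rightarrow> 'f trm \<Rightarrow> bool" where
  "wf_trm arf (Var i) = True"
| "wf_trm arf (Fn f ts) = (length ts = arf f \<and> (\<forall>t\<in>set ts. wf_trm arf t))"

fun wf_fm :: "('f \<Rightarrow> nat) \<Rightarrow> ('r \<Rightarrow> nat) \<Rightarrow> ('f, 'r) afm \<Rightarrow> bool" where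
  "wf_fm arf arr One = True"
| "wf_fm arf arr (Rel r ts) = (length ts = arr r \<and> (\<forall>t\<in>set ts. wf_trm arf t))"
| "wf_fm arf arr (Dst s t) = (wf_trm arf s \<and> wf_trm arf t)"
| "wf_fm arf arr (Scale c \<phi>) = wf_fm arf arr \<phi>"
| "wf_fm arf arr (Add \<phi> \<psi>) = (wf_fm arf arr \<phi> \<and> wf_fm arf arr \<psi>)"
| "wf_fm arf arr (Inf_q x \<phi>) = wf_fm arf arr \<phi>"
| "wf_fm arf arr (Sup_q x \<phi>) = wf_fm arf arr \<phi>"

fun fv_trm :: "'f trm \<Rightarrow> nat set" where
  "fv_trm (Var i) = {i}"
| "fv_trm (Fn f ts) = (\<Union>t\<in>set ts. fv_trm t)"

fun fv_fm :: "('f, 'r) afm \<Rightarrow> nat set" where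
  "fv_fm One = {}"
| "fv_fm (Rel r ts) = (\<Union>t\<in>set ts. fv_trm t)"
| "fv_fm (Dst s t) = fv_trm s \<union> fv_trm t"
| "fv_fm (Scale c \<phi>) = fv_fm \<phi>"
| "fv_fm (Add \<phi> \<psi>) = fv_fm \<phi> \<union> fv_fm \<psi>"
| "fv_fm (Inf_q x \<phi>) = fv_fm \<phi> - {x}"
| "fv_fm (Sup_q x \<phi>) = fv_fm \<phi> - {x}"

text \<open>An interpretation consists of a carrier, a metric d, function interpretations F and
  relation interpretations R.  Substructures share d, F, R and only change the carrier.\<close>

fun eval_trm :: "('f \<Rightarrow> 'a list \<Rightarrow> 'a) \<Rightarrow> (nat \<Rightarrow> 'a) \<Rightarrow> 'f trm \<Rightarrow> 'a" where
  "eval_trm F \<sigma> (Var i) = \<sigma> i"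
| "eval_trm F \<sigma> (Fn f ts) = F f (map (eval_trm F \<sigma>) ts)"

fun eval_fm :: "'a set \<Rightarrow> ('a \<Rightarrow> 'a \<Rightarrow> real) \<Rightarrow> ('f \<Rightarrow> 'a list \<Rightarrow> 'a) \<Rightarrow> ('r \<Rightarrow> 'a list \<Rightarrow> real)
    \<Rightarrow> (nat \<Rightarrow> 'a) \<Rightarrow> ('f, 'r) afm \<Rightarrow> real" where
  "eval_fm M d F R \<sigma> One = 1"
| "eval_fm M d F R \<sigma> (Rel r ts) = R r (map (eval_trm F \<sigma>) ts)"
| "eval_fm M d F R \<sigma> (Dst s t) = d (eval_trm F \<sigma> s) (eval_trm F \<sigma> t)"
| "eval_fm M d F R \<sigma> (Scale c \<phi>) = c * eval_fm M d F R \<sigma> \<phi>"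
| "eval_fm M d F R \<sigma> (Add \<phi> \<psi>) = eval_fm M d F R \<sigma> \<phi> + eval_fm M d F R \<sigma> \<psi>"
| "eval_fm M d F R \<sigma> (Inf_q x \<phi>) = (INF a\<in>M. eval_fm M d F R (\<sigma>(x := a)) \<phi>)"
| "eval_fm M d F R \<sigma> (Sup_q x \<phi>) = (SUP a\<in>M. eval_fm M d F R (\<sigma>(x := a)) \<phi>)"

text \<open>n-tuples are lists of length n; M^n carries the max metric.\<close>

definition tuples :: "'a set \<Rightarrow> nat \<Rightarrow> 'a list set" where
  "tuples M n = {xs. length xs = n \<and> set xs \<subseteq> M}"

definition tdist :: "('a \<Rightarrow> 'a \<Rightarrow> real) \<Rightarrow> 'a list \<Rightarrow> 'a list \<Rightarrow> real" where
  "tdist d xs ys = Max (insert 0 {d (xs ! i) (ys ! i) | i. i < length xs})"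

definition is_structure ::
  "('f \<Rightarrow> nat) \<Rightarrow> ('r \<Rightarrow> nat) \<Rightarrow> 'a set \<Rightarrow> ('a \<Rightarrow> 'a \<Rightarrow> real)
    \<Rightarrow> ('f \<Rightarrow> 'a list \<Rightarrow> 'a) \<Rightarrow> ('r \<Rightarrow> 'a list \<Rightarrow> real) \<Rightarrow> bool" where
  "is_structure arf arr M d F R \<longleftrightarrow>
     M \<noteq> {} \<and> Metric_space M d \<and> Metric_space.mcomplete M d \<and>
     (\<forall>x\<in>M. \<forall>y\<in>M. d x y \<le> 1) \<and>
     (\<forall>f. \<forall>xs\<in>tuples M (arf f). F f xs \<in> M) \<and>
     (\<forall>f. \<exists>L. \<forall>xs\<in>tuples M (arf f). \<forall>ys\<in>tuples M (arf f).
            d (F f xs) (F f ys) \<le> L * tdist d xs ys) \<and>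
     (\<forall>r. \<forall>xs\<in>tuples M (arr r). 0 \<le> R r xs \<and> R r xs \<le> 1) \<and>
     (\<forall>r. \<exists>L. \<forall>xs\<in>tuples M (arr r). \<forall>ys\<in>tuples M (arr r).
            \<bar>R r xs - R r ys\<bar> \<le> L * tdist d xs ys)"

definition elem_substructure ::
  "('f \<Rightarrow> nat) \<Rightarrow> ('r \<Rightarrow> nat) \<Rightarrow> 'a set \<Rightarrow> 'a set \<Rightarrow> ('a \<Rightarrow> 'a \<Rightarrow> real)
    \<Rightarrow> ('f \<Rightarrow> 'a list \<Rightarrow> 'a) \<Rightarrow> ('r \<Rightarrow> 'a list \<Rightarrow> real) \<Rightarrow> bool" where
  "elem_substructure arf arr K M d F R \<longleftrightarrow>
     K \<subseteq> M \<and> is_structure arf arr K d F R \<and>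
     (\<forall>\<phi> \<sigma>. wf_fm arf arr \<phi> \<longrightarrow> range \<sigma> \<subseteq> K \<longrightarrow>
        eval_fm K d F R \<sigma> \<phi> = eval_fm M d F R \<sigma> \<phi>)"

text \<open>Assignment induced by a tuple (variables \<ge> n are irrelevant for formulas
  whose free variables are among 0..n-1).\<close>

definition tuple_asg :: "'a list \<Rightarrow> nat \<Rightarrow> 'a" where
  "tuple_asg xs i = (if i < length xs then xs ! i else undefined)"

definition definable_pred ::
  "('f \<Rightarrow> nat) \<Rightarrow> ('r \<Rightarrow> nat) \<Rightarrow> 'a set \<Rightarrow> ('a \<Rightarrow> 'a \<Rightarrow> real)
    \<Rightarrow> ('f \<Rightarrow> 'a list \<Rightarrow> 'a) \<Rightarrow> ('r \<Rightarrow> 'a list \<Rightarrow> real) \<Rightarrow> nat \<Rightarrow> ('a list \<Rightarrow> real) \<Rightarrow> bool" where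
  "definable_pred arf arr M d F R n P \<longleftrightarrow>
     (\<exists>\<phi> :: nat \<Rightarrow> ('f, 'r) afm.
        (\<forall>k. wf_fm arf arr (\<phi> k) \<and> fv_fm (\<phi> k) \<subseteq> {..<n}) \<and>
        (\<forall>\<epsilon>>0. \<exists>N. \<forall>k\<ge>N. \<forall>xs\<in>tuples M n.
            \<bar>eval_fm M d F R (tuple_asg xs) (\<phi> k) - P xs\<bar> \<le> \<epsilon>))"

definition tclosure :: "'a set \<Rightarrow> ('a \<Rightarrow> 'a \<Rightarrow> real) \<Rightarrow> nat \<Rightarrow> 'a list set \<Rightarrow> 'a list set" where
  "tclosure M d n S = {xs \<in> tuples M n. \<forall>\<epsilon>>0. \<exists>ys\<in>S. tdist d xs ys < \<epsilon>}"

definition setdist :: "('a \<Rightarrow> 'a \<Rightarrow> real) \<Rightarrow> 'a list set \<Rightarrow> 'a list \<Rightarrow> real" where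
  "setdist d D xs = (INF ys\<in>D. tdist d xs ys)"

definition definable_set ::
  "('f \<Rightarrow> nat) \<Rightarrow> ('r \<Rightarrow> nat) \<Rightarrow> 'a set \<Rightarrow> ('a \<Rightarrow> 'a \<Rightarrow> real)
    \<Rightarrow> ('f \<Rightarrow> 'a list \<Rightarrow> 'a) \<Rightarrow> ('r \<Rightarrow> 'a list \<Rightarrow> real) \<Rightarrow> nat \<Rightarrow> 'a list set \<Rightarrow> bool" where
  "definable_set arf arr M d F R n D \<longleftrightarrow>
     D \<subseteq> tuples M n \<and> tclosure M d n D = D \<and>
     definable_pred arf arr M d F R n (setdist d D)"

end

theory Submission
  imports Defs
begin

text \<open>The predicates \<open>d(\<cdot>, D\<^sub>k)\<close> decrease pointwise to \<open>d(\<cdot>, D)\<close> and are all 1-Lipschitz,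
  so on the compact space \<open>K\<^sup>n\<close> Dini's argument makes the convergence uniform. An inequality
  \<open>P \<le> Q + c\<close> between definable predicates is, up to any \<open>\<epsilon>\<close>, the value of the sentence
  \<open>sup\<^sub>x (\<phi> - \<psi>)\<close> for approximating formulas, so by \<open>K \<preccurlyeq> M\<close> it passes from \<open>K\<^sup>n\<close> to \<open>M\<^sup>n\<close>. Hence
  the convergence is uniform on \<open>M\<^sup>n\<close>, and a uniform limit of definable predicates is definable.\<close>

section \<open>The maximum metric on tuples\<close>

lemma finite_tdist_terms: "finite {d (xs ! i) (ys ! i) | i. i < length xs}"
proof -
  have "{d (xs ! i) (ys ! i) | i. i < length xs} = (\<lambda>i. d (xs ! i) (ys ! i)) ` {..<length xs}"
    by auto
  then show ?thesis by simp
qed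

lemma tdist_nonneg: "0 \<le> tdist d xs ys"
  unfolding tdist_def using finite_tdist_terms by (simp add: Max_ge_iff)

lemma nth_dist_le_tdist: "i < length xs \<Longrightarrow> d (xs ! i) (ys ! i) \<le> tdist d xs ys"
  unfolding tdist_def using finite_tdist_terms by (auto simp add: Max_ge_iff)

lemma tdist_leI:
  "0 \<le> c \<Longrightarrow> (\<And>i. i < length xs \<Longrightarrow> d (xs ! i) (ys ! i) \<le> c) \<Longrightarrow> tdist d xs ys \<le> c"
  unfolding tdist_def using finite_tdist_terms by (auto simp add: Max_le_iff)

lemma tdist_lessI:
  "0 < c \<Longrightarrow> (\<And>i. i < length xs \<Longrightarrow> d (xs ! i) (ys ! i) < c) \<Longrightarrow> tdist d xs ys < c"
  unfolding tdist_def using finite_tdist_terms by (auto simp add: Max_less_iff)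

lemma tuples_nth: "xs \<in> tuples M n \<Longrightarrow> i < n \<Longrightarrow> xs ! i \<in> M"
  unfolding tuples_def by auto

lemma tuples_mono: "K \<subseteq> M \<Longrightarrow> tuples K n \<subseteq> tuples M n"
  unfolding tuples_def by auto

lemma tdist_triangle:
  assumes "Metric_space M d" "xs \<in> tuples M n" "ys \<in> tuples M n" "zs \<in> tuples M n"
  shows "tdist d xs zs \<le> tdist d xs ys + tdist d ys zs"
proof (rule tdist_leI)
  show "0 \<le> tdist d xs ys + tdist d ys zs"
    using tdist_nonneg[of d xs ys] tdist_nonneg[of d ys zs] by linarith
next
  fix i assume i: "i < length xs"
  have len: "length xs = n" "length ys = n" using assms unfolding tuples_def by auto
  have "d (xs ! i) (zs ! i) \<le> d (xs ! i) (ys ! i) + d (ys ! i) (zs ! i)"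
    using i len assms by (intro Metric_space.triangle[OF assms(1)]) (auto intro: tuples_nth)
  also have "\<dots> \<le> tdist d xs ys + tdist d ys zs"
    using nth_dist_le_tdist[of i xs d ys] nth_dist_le_tdist[of i ys d zs] i len by simp
  finally show "d (xs ! i) (zs ! i) \<le> tdist d xs ys + tdist d ys zs" .
qed

lemma tdist_commute:
  assumes "Metric_space M d" "xs \<in> tuples M n" "ys \<in> tuples M n"
  shows "tdist d xs ys = tdist d ys xs"
proof -
  have "tdist d xs ys \<le> tdist d ys xs" if "length xs = length ys" for xs ys
  proof (rule tdist_leI[OF tdist_nonneg])
    fix i assume "i < length xs"
    then have "d (ys ! i) (xs ! i) \<le> tdist d ys xs" using that by (simp add: nth_dist_le_tdist)
    then show "d (xs ! i) (ys ! i) \<le> tdist d ys xs" by (simp add: Metric_space.commute[OF assms(1)])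
  qed
  moreover have "length xs = length ys" using assms unfolding tuples_def by auto
  ultimately show ?thesis by (simp add: order_antisym)
qed

lemma tdist_self:
  assumes "Metric_space M d" "xs \<in> tuples M n"
  shows "tdist d xs xs = 0"
proof -
  have "tdist d xs xs \<le> 0"
  proof (rule tdist_leI)
    fix i assume "i < length xs"
    then have "xs ! i \<in> M" using assms(2) unfolding tuples_def by auto
    then show "d (xs ! i) (xs ! i) \<le> 0" by (simp add: Metric_space.mdist_zero[OF assms(1)])
  qed simp
  then show ?thesis using tdist_nonneg[of d xs xs] by simp
qed

lemma compact_space_finite_net:
  assumes ms: "Metric_space K d" and compact: "compact_space (Metric_space.mtopology K d)"
    and e: "e > 0"
  shows "\<exists>C. finite C \<and> C \<subseteq> K \<and> (\<forall>a\<in>K. \<exists>c\<in>C. d a c < e)"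
proof -
  have "Metric_space.mtotally_bounded K d K"
    using Metric_space.compact_space_eq_mcomplete_mtotally_bounded[OF ms] compact by blast
  then have "\<exists>C. finite C \<and> C \<subseteq> K \<and> K \<subseteq> (\<Union>c\<in>C. Metric_space.mball K d c e)"
    using e unfolding Metric_space.mtotally_bounded_def[OF ms] by blast
  then obtain C where C: "finite C" "C \<subseteq> K" "K \<subseteq> (\<Union>c\<in>C. Metric_space.mball K d c e)"
    by blast
  have "\<exists>c\<in>C. d a c < e" if "a \<in> K" for a
  proof -
    obtain c where c: "c \<in> C" "a \<in> Metric_space.mball K d c e" using C(3) \<open>a \<in> K\<close> by blast
    then have "d c a < e" using Metric_space.in_mball[OF ms] by blast
    then have "d a c < e" using Metric_space.commute[OF ms, of a c] by simp
    then show ?thesis using c(1) by blast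
  qed
  then show ?thesis using C(1,2) by blast
qed

lemma finite_net_tuples:
  assumes ms: "Metric_space K d" and compact: "compact_space (Metric_space.mtopology K d)"
    and e: "e > 0"
  shows "\<exists>N. finite N \<and> N \<subseteq> tuples K n \<and> (\<forall>y\<in>tuples K n. \<exists>z\<in>N. tdist d y z < e)"
proof -
  obtain C where C: "finite C" "C \<subseteq> K" "\<forall>a\<in>K. \<exists>c\<in>C. d a c < e"
    using compact_space_finite_net[OF ms compact e] by blast
  then obtain near where near: "\<And>a. a \<in> K \<Longrightarrow> near a \<in> C \<and> d a (near a) < e"
    by metis
  have "tuples C n = {xs. set xs \<subseteq> C \<and> length xs = n}" unfolding tuples_def by auto
  then have "finite (tuples C n)" using finite_lists_length_eq[OF C(1)] by simp
  moreover have "tuples C n \<subseteq> tuples K n" using C(2) by (rule tuples_mono)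
  moreover have "\<exists>z\<in>tuples C n. tdist d y z < e" if y: "y \<in> tuples K n" for y
  proof
    show "map near y \<in> tuples C n" using y near unfolding tuples_def by auto
    have "d (y ! i) (near (y ! i)) < e" if "i < length y" for i
      using near tuples_nth[OF y] that y unfolding tuples_def by auto
    then show "tdist d y (map near y) < e" using e by (intro tdist_lessI) auto
  qed
  ultimately show ?thesis by blast
qed

section \<open>Evaluation of affine formulas\<close>

lemma is_structure_Metric_space: "is_structure arf arr M d F R \<Longrightarrow> Metric_space M d"
  unfolding is_structure_def by blast

lemma eval_trm_in_carrier:
  assumes "is_structure arf arr M d F R" "range \<sigma> \<subseteq> M"
  shows "wf_trm arf t \<Longrightarrow> eval_trm F \<sigma> t \<in> M"
proof (induct t)
  case (Var x) then show ?case using assms(2) by auto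
next
  case (Fn f ts)
  then have "map (eval_trm F \<sigma>) ts \<in> tuples M (arf f)" unfolding tuples_def by auto
  then show ?case using assms(1) unfolding is_structure_def by simp
qed

text \<open>\<open>INF\<close>/\<open>SUP\<close> on \<open>real\<close> are only meaningful on bounded sets, so the quantifier cases
  need an a priori bound on the values of a formula.\<close>

fun fm_bound :: "('f, 'r) afm \<Rightarrow> real" where
  "fm_bound One = 1"
| "fm_bound (Rel r ts) = 1"
| "fm_bound (Dst s t) = 1"
| "fm_bound (Scale c \<phi>) = \<bar>c\<bar> * fm_bound \<phi>"
| "fm_bound (Add \<phi> \<psi>) = fm_bound \<phi> + fm_bound \<psi>"
| "fm_bound (Inf_q x \<phi>) = fm_bound \<phi>"
| "fm_bound (Sup_q x \<phi>) = fm_bound \<phi>"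

lemma abs_eval_fm_le_fm_bound:
  assumes M: "is_structure arf arr M d F R"
  shows "wf_fm arf arr \<phi> \<Longrightarrow> range \<sigma> \<subseteq> M \<Longrightarrow> \<bar>eval_fm M d F R \<sigma> \<phi>\<bar> \<le> fm_bound \<phi>"
proof (induct \<phi> arbitrary: \<sigma>)
  case (Rel r ts)
  then have "map (eval_trm F \<sigma>) ts \<in> tuples M (arr r)"
    using eval_trm_in_carrier[OF M] unfolding tuples_def by auto
  then show ?case using M unfolding is_structure_def by simp
next
  case (Dst s t)
  then have "eval_trm F \<sigma> s \<in> M" "eval_trm F \<sigma> t \<in> M"
    using eval_trm_in_carrier[OF M] by auto
  moreover have "Metric_space M d" "\<forall>x\<in>M. \<forall>y\<in>M. d x y \<le> 1"
    using M unfolding is_structure_def by blast+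
  ultimately show ?case by (simp add: Metric_space.nonneg)
next
  case (Scale c \<phi>)
  then show ?case by (simp add: abs_mult mult_left_mono)
next
  case (Add \<phi> \<psi>)
  then show ?case by (auto intro: order_trans[OF abs_triangle_ineq] add_mono)
next
  case (Inf_q x \<phi>)
  have "\<bar>eval_fm M d F R (\<sigma>(x := a)) \<phi>\<bar> \<le> fm_bound \<phi>" if "a \<in> M" for a
    using Inf_q.prems that by (intro Inf_q.hyps) auto
  moreover have "M \<noteq> {}" using M unfolding is_structure_def by blast
  ultimately show ?case by (auto intro!: cInf_abs_ge)
next
  case (Sup_q x \<phi>)
  have "\<bar>eval_fm M d F R (\<sigma>(x := a)) \<phi>\<bar> \<le> fm_bound \<phi>" if "a \<in> M" for a
    using Sup_q.prems that by (intro Sup_q.hyps) auto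
  moreover have "M \<noteq> {}" using M unfolding is_structure_def by blast
  ultimately show ?case by (auto intro!: cSup_abs_le)
qed simp

lemma eval_trm_cong:
  "(\<And>i. i \<in> fv_trm t \<Longrightarrow> \<sigma> i = \<tau> i) \<Longrightarrow> eval_trm F \<sigma> t = eval_trm F \<tau> t"
proof (induct t)
  case (Fn f ts)
  then have "map (eval_trm F \<sigma>) ts = map (eval_trm F \<tau>) ts" by (intro map_cong) auto
  then show ?case by (metis eval_trm.simps(2))
qed simp

lemma eval_fm_cong:
  "(\<And>i. i \<in> fv_fm \<phi> \<Longrightarrow> \<sigma> i = \<tau> i) \<Longrightarrow> eval_fm M d F R \<sigma> \<phi> = eval_fm M d F R \<tau> \<phi>"
proof (induct \<phi> arbitrary: \<sigma> \<tau>)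
  case (Rel r ts)
  then have "map (eval_trm F \<sigma>) ts = map (eval_trm F \<tau>) ts"
    by (intro map_cong eval_trm_cong) auto
  then show ?case by (metis eval_fm.simps(2))
next
  case (Dst s t)
  have "eval_trm F \<sigma> s = eval_trm F \<tau> s" "eval_trm F \<sigma> t = eval_trm F \<tau> t"
    using Dst.prems by (intro eval_trm_cong; simp)+
  then show ?case by simp
next
  case (Scale c \<phi>)
  have "eval_fm M d F R \<sigma> \<phi> = eval_fm M d F R \<tau> \<phi>"
    using Scale.prems by (intro Scale.hyps) simp
  then show ?case by simp
next
  case (Add \<phi> \<psi>)
  have "eval_fm M d F R \<sigma> \<phi> = eval_fm M d F R \<tau> \<phi>" "eval_fm M d F R \<sigma> \<psi> = eval_fm M d F R \<tau> \<psi>"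
    using Add.prems by (intro Add.hyps; simp)+
  then show ?case by simp
next
  case (Inf_q x \<phi>)
  have "eval_fm M d F R (\<sigma>(x := a)) \<phi> = eval_fm M d F R (\<tau>(x := a)) \<phi>" for a
    using Inf_q.prems by (intro Inf_q.hyps) auto
  then show ?case by simp
next
  case (Sup_q x \<phi>)
  have "eval_fm M d F R (\<sigma>(x := a)) \<phi> = eval_fm M d F R (\<tau>(x := a)) \<phi>" for a
    using Sup_q.prems by (intro Sup_q.hyps) auto
  then show ?case by simp
qed simp

section \<open>Transfer from the elementary substructure\<close>

fun Sup_qs :: "nat list \<Rightarrow> ('f, 'r) afm \<Rightarrow> ('f, 'r) afm" where
  "Sup_qs [] \<psi> = \<psi>"
| "Sup_qs (v # vs) \<psi> = Sup_q v (Sup_qs vs \<psi>)"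

lemma wf_fm_Sup_qs: "wf_fm arf arr \<psi> \<Longrightarrow> wf_fm arf arr (Sup_qs vs \<psi>)"
  by (induct vs) auto

lemma eval_fm_le_Sup_qs:
  assumes M: "is_structure arf arr M d F R" and wf: "wf_fm arf arr \<psi>"
  shows "range \<sigma> \<subseteq> M \<Longrightarrow> range \<tau> \<subseteq> M \<Longrightarrow> (\<And>i. i \<notin> set vs \<Longrightarrow> \<tau> i = \<sigma> i) \<Longrightarrow>
    eval_fm M d F R \<tau> \<psi> \<le> eval_fm M d F R \<sigma> (Sup_qs vs \<psi>)"
proof (induct vs arbitrary: \<sigma>)
  case Nil
  then have "\<tau> = \<sigma>" by auto
  then show ?case by simp
next
  case (Cons v vs)
  let ?f = "\<lambda>a. eval_fm M d F R (\<sigma>(v := a)) (Sup_qs vs \<psi>)"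
  have "range (\<sigma>(v := a)) \<subseteq> M" if "a \<in> M" for a
    using Cons.prems(1) that by auto
  then have "bdd_above (?f ` M)"
    using abs_eval_fm_le_fm_bound[OF M wf_fm_Sup_qs[OF wf]]
    by (intro bdd_aboveI2[where M = "fm_bound (Sup_qs vs \<psi>)"]) (simp add: abs_le_iff)
  moreover have "\<tau> v \<in> M" using Cons.prems(2) by blast
  moreover have "eval_fm M d F R \<tau> \<psi> \<le> ?f (\<tau> v)"
    using Cons.prems \<open>\<tau> v \<in> M\<close> by (intro Cons.hyps) auto
  ultimately show ?case by (auto intro: cSUP_upper2)
qed

lemma eval_fm_Sup_qs_le:
  assumes "K \<noteq> {}" "\<And>\<tau>. range \<tau> \<subseteq> K \<Longrightarrow> eval_fm K d F R \<tau> \<psi> \<le> c"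
  shows "range \<sigma> \<subseteq> K \<Longrightarrow> eval_fm K d F R \<sigma> (Sup_qs vs \<psi>) \<le> c"
proof (induct vs arbitrary: \<sigma>)
  case Nil
  then show ?case using assms(2) by simp
next
  case (Cons v vs)
  have "eval_fm K d F R (\<sigma>(v := a)) (Sup_qs vs \<psi>) \<le> c" if "a \<in> K" for a
    using Cons.prems that by (intro Cons.hyps) auto
  then show ?case using assms(1) by (simp add: cSUP_least)
qed

lemma elem_substructure_tuples_subset:
  "elem_substructure arf arr K M d F R \<Longrightarrow> tuples K n \<subseteq> tuples M n"
  unfolding elem_substructure_def by (simp add: tuples_mono)

text \<open>The bound passes through the sentence \<open>sup\<^sub>x\<^sub>0 \<dots> sup\<^sub>x\<^sub>n\<^sub>-\<^sub>1 \<psi>\<close>, whose value is the same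
  in \<open>K\<close> and \<open>M\<close>.\<close>

lemma elem_substructure_le_transfer:
  assumes M: "is_structure arf arr M d F R" and El: "elem_substructure arf arr K M d F R"
    and wf: "wf_fm arf arr \<psi>" and fv: "fv_fm \<psi> \<subseteq> {..<n}"
    and le_K: "\<And>y. y \<in> tuples K n \<Longrightarrow> eval_fm M d F R (tuple_asg y) \<psi> \<le> c"
    and x: "x \<in> tuples M n"
  shows "eval_fm M d F R (tuple_asg x) \<psi> \<le> c"
proof -
  have KM: "K \<subseteq> M" and "K \<noteq> {}"
    and elem: "\<And>\<phi> \<sigma>. wf_fm arf arr \<phi> \<Longrightarrow> range \<sigma> \<subseteq> K \<Longrightarrow> eval_fm K d F R \<sigma> \<phi> = eval_fm M d F R \<sigma> \<phi>"
    using El unfolding elem_substructure_def is_structure_def by auto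
  then obtain a where a: "a \<in> K" by auto
  define \<tau> where "\<tau> i = (if i < n then x ! i else a)" for i
  have "eval_fm M d F R (tuple_asg x) \<psi> = eval_fm M d F R \<tau> \<psi>"
    using fv x by (intro eval_fm_cong) (auto simp: tuple_asg_def \<tau>_def tuples_def)
  also have "\<dots> \<le> eval_fm M d F R (\<lambda>_. a) (Sup_qs [0..<n] \<psi>)"
    using a x KM by (intro eval_fm_le_Sup_qs[OF M wf]) (auto simp: \<tau>_def tuples_def)
  also have "\<dots> = eval_fm K d F R (\<lambda>_. a) (Sup_qs [0..<n] \<psi>)"
    using elem[OF wf_fm_Sup_qs[OF wf]] a by auto
  also have "\<dots> \<le> c"
  proof (rule eval_fm_Sup_qs_le[OF \<open>K \<noteq> {}\<close>])
    fix \<sigma> :: "nat \<Rightarrow> _" assume \<sigma>: "range \<sigma> \<subseteq> K"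
    have "eval_fm K d F R \<sigma> \<psi> = eval_fm M d F R \<sigma> \<psi>" by (rule elem[OF wf \<sigma>])
    also have "\<dots> = eval_fm M d F R (tuple_asg (map \<sigma> [0..<n])) \<psi>"
      using fv by (intro eval_fm_cong) (auto simp: tuple_asg_def)
    also have "\<dots> \<le> c" using \<sigma> by (intro le_K) (auto simp: tuples_def)
    finally show "eval_fm K d F R \<sigma> \<psi> \<le> c" .
  qed (use a in auto)
  finally show ?thesis .
qed

section \<open>Definable predicates\<close>

lemma definable_pred_iff:
  fixes arf :: "'f \<Rightarrow> nat" and arr :: "'r \<Rightarrow> nat"
  shows "definable_pred arf arr M d F R n P \<longleftrightarrow>
    (\<forall>e>0. \<exists>\<psi>. wf_fm arf arr \<psi> \<and> fv_fm \<psi> \<subseteq> {..<n} \<and>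
       (\<forall>xs\<in>tuples M n. \<bar>eval_fm M d F R (tuple_asg xs) \<psi> - P xs\<bar> \<le> e))"
  (is "_ \<longleftrightarrow> (\<forall>e>0. \<exists>\<psi>. ?approx e \<psi>)")
proof
  assume "definable_pred arf arr M d F R n P"
  then obtain \<phi> :: "nat \<Rightarrow> ('f, 'r) afm" where wf: "\<And>k. wf_fm arf arr (\<phi> k) \<and> fv_fm (\<phi> k) \<subseteq> {..<n}"
    and lim: "\<And>e. e > 0 \<Longrightarrow> \<exists>N. \<forall>k\<ge>N. \<forall>xs\<in>tuples M n.
                \<bar>eval_fm M d F R (tuple_asg xs) (\<phi> k) - P xs\<bar> \<le> e"
    unfolding definable_pred_def by blast
  show "\<forall>e>0. \<exists>\<psi>. ?approx e \<psi>"
  proof (intro allI impI)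
    fix e :: real assume "e > 0"
    then obtain N where "\<forall>xs\<in>tuples M n. \<bar>eval_fm M d F R (tuple_asg xs) (\<phi> N) - P xs\<bar> \<le> e"
      using lim by blast
    then show "\<exists>\<psi>. ?approx e \<psi>" using wf by blast
  qed
next
  assume approx: "\<forall>e>0. \<exists>\<psi>. ?approx e \<psi>"
  have "\<forall>k::nat. \<exists>\<psi>. ?approx (1 / (real k + 1)) \<psi>"
  proof
    fix k :: nat
    have "1 / (real k + 1) > 0" by simp
    then show "\<exists>\<psi>. ?approx (1 / (real k + 1)) \<psi>" using approx by blast
  qed
  then obtain \<phi> where \<phi>: "\<forall>k. ?approx (1 / (real k + 1)) (\<phi> k)"
    by (rule choice[THEN exE])
  show "definable_pred arf arr M d F R n P"
    unfolding definable_pred_def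
  proof (intro exI[of _ \<phi>] conjI allI impI)
    show "wf_fm arf arr (\<phi> k)" "fv_fm (\<phi> k) \<subseteq> {..<n}" for k using \<phi> by blast+
    fix e :: real assume "e > 0"
    obtain N :: nat where "1 / e < real N" using reals_Archimedean2 by blast
    have small: "1 / (real k + 1) \<le> e" if "N \<le> k" for k
    proof -
      have "1 / e < real k + 1" using \<open>1 / e < real N\<close> that by linarith
      then show ?thesis using \<open>e > 0\<close> by (simp add: field_simps)
    qed
    show "\<exists>N. \<forall>k\<ge>N. \<forall>xs\<in>tuples M n. \<bar>eval_fm M d F R (tuple_asg xs) (\<phi> k) - P xs\<bar> \<le> e"
      using \<phi> small by (meson order_trans)
  qed
qed

lemma definable_pred_le_transfer:
  assumes M: "is_structure arf arr M d F R" and El: "elem_substructure arf arr K M d F R"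
    and P: "definable_pred arf arr M d F R n P" and Q: "definable_pred arf arr M d F R n Q"
    and le_K: "\<And>y. y \<in> tuples K n \<Longrightarrow> P y \<le> Q y + c"
    and x: "x \<in> tuples M n"
  shows "P x \<le> Q x + c"
proof (rule field_le_epsilon)
  fix e :: real assume "e > 0"
  then have e4: "e / 4 > 0" by simp
  obtain \<phi> where \<phi>: "wf_fm arf arr \<phi>" "fv_fm \<phi> \<subseteq> {..<n}"
      "\<forall>xs\<in>tuples M n. \<bar>eval_fm M d F R (tuple_asg xs) \<phi> - P xs\<bar> \<le> e / 4"
    using P e4 unfolding definable_pred_iff by blast
  obtain \<psi> where \<psi>: "wf_fm arf arr \<psi>" "fv_fm \<psi> \<subseteq> {..<n}"
      "\<forall>xs\<in>tuples M n. \<bar>eval_fm M d F R (tuple_asg xs) \<psi> - Q xs\<bar> \<le> e / 4"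
    using Q e4 unfolding definable_pred_iff by blast
  have KM: "tuples K n \<subseteq> tuples M n" by (rule elem_substructure_tuples_subset[OF El])
  let ?\<chi> = "Add \<phi> (Scale (-1) \<psi>)"
  have "eval_fm M d F R (tuple_asg x) ?\<chi> \<le> c + e / 2"
  proof (rule elem_substructure_le_transfer[OF M El _ _ _ x])
    show "wf_fm arf arr ?\<chi>" "fv_fm ?\<chi> \<subseteq> {..<n}" using \<phi> \<psi> by auto
    fix y assume y: "y \<in> tuples K n"
    then have "y \<in> tuples M n" using KM by blast
    then have "\<bar>eval_fm M d F R (tuple_asg y) \<phi> - P y\<bar> \<le> e / 4"
      "\<bar>eval_fm M d F R (tuple_asg y) \<psi> - Q y\<bar> \<le> e / 4"
      using \<phi>(3) \<psi>(3) by blast+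
    with le_K[OF y] show "eval_fm M d F R (tuple_asg y) ?\<chi> \<le> c + e / 2"
      unfolding abs_le_iff by simp
  qed
  moreover have "\<bar>eval_fm M d F R (tuple_asg x) \<phi> - P x\<bar> \<le> e / 4"
    "\<bar>eval_fm M d F R (tuple_asg x) \<psi> - Q x\<bar> \<le> e / 4"
    using \<phi>(3) \<psi>(3) x by blast+
  ultimately show "P x \<le> Q x + c + e" unfolding abs_le_iff by simp
qed

lemma definable_pred_uniform_limit:
  assumes P: "\<And>k. definable_pred arf arr M d F R n (P k)"
    and lim: "\<And>e. e > 0 \<Longrightarrow> \<exists>k. \<forall>xs\<in>tuples M n. \<bar>P k xs - G xs\<bar> \<le> e"
  shows "definable_pred arf arr M d F R n G"
  unfolding definable_pred_iff
proof (intro allI impI)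
  fix e :: real assume "e > 0"
  then obtain k where k: "\<forall>xs\<in>tuples M n. \<bar>P k xs - G xs\<bar> \<le> e / 2"
    using lim[of "e / 2"] by auto
  obtain \<psi> where \<psi>: "wf_fm arf arr \<psi>" "fv_fm \<psi> \<subseteq> {..<n}"
      "\<forall>xs\<in>tuples M n. \<bar>eval_fm M d F R (tuple_asg xs) \<psi> - P k xs\<bar> \<le> e / 2"
    using P[of k] \<open>e > 0\<close> unfolding definable_pred_iff by (meson half_gt_zero)
  have "\<bar>eval_fm M d F R (tuple_asg xs) \<psi> - G xs\<bar> \<le> e" if "xs \<in> tuples M n" for xs
  proof -
    have "\<bar>P k xs - G xs\<bar> \<le> e / 2" "\<bar>eval_fm M d F R (tuple_asg xs) \<psi> - P k xs\<bar> \<le> e / 2"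
      using k \<psi>(3) that by blast+
    then show ?thesis unfolding abs_le_iff by linarith
  qed
  with \<psi>(1,2) show "\<exists>\<psi>. wf_fm arf arr \<psi> \<and> fv_fm \<psi> \<subseteq> {..<n} \<and>
      (\<forall>xs\<in>tuples M n. \<bar>eval_fm M d F R (tuple_asg xs) \<psi> - G xs\<bar> \<le> e)"
    by blast
qed

section \<open>Distance to a set of tuples\<close>

lemma setdist_le_tdist: "ys \<in> D \<Longrightarrow> setdist d D xs \<le> tdist d xs ys"
  unfolding setdist_def by (rule cINF_lower) (auto intro: bdd_belowI2[where m = 0] tdist_nonneg)

lemma setdist_greatest:
  "D \<noteq> {} \<Longrightarrow> (\<And>ys. ys \<in> D \<Longrightarrow> c \<le> tdist d xs ys) \<Longrightarrow> c \<le> setdist d D xs"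
  unfolding setdist_def by (rule cINF_greatest)

lemma setdist_approx:
  assumes "D \<noteq> {}" "e > 0"
  shows "\<exists>ys\<in>D. tdist d xs ys < setdist d D xs + e"
proof (rule ccontr)
  assume "\<not> ?thesis"
  then have "setdist d D xs + e \<le> setdist d D xs"
    using assms(1) by (intro setdist_greatest) auto
  then show False using assms(2) by simp
qed

lemma setdist_antimono: "D \<subseteq> D' \<Longrightarrow> D \<noteq> {} \<Longrightarrow> setdist d D' xs \<le> setdist d D xs"
  by (rule setdist_greatest) (auto intro: setdist_le_tdist)

lemma setdist_Lipschitz:
  assumes ms: "Metric_space M d" and D: "D \<noteq> {}" "D \<subseteq> tuples M n"
    and xs: "xs \<in> tuples M n" and ys: "ys \<in> tuples M n"
  shows "\<bar>setdist d D xs - setdist d D ys\<bar> \<le> tdist d xs ys"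
proof -
  have "setdist d D xs \<le> tdist d xs ys + setdist d D ys"
    if "xs \<in> tuples M n" "ys \<in> tuples M n" for xs ys
  proof -
    have "setdist d D xs - tdist d xs ys \<le> setdist d D ys"
    proof (rule setdist_greatest[OF D(1)])
      fix zs assume "zs \<in> D"
      then have "setdist d D xs \<le> tdist d xs zs" "tdist d xs zs \<le> tdist d xs ys + tdist d ys zs"
        using that D(2) by (auto intro: setdist_le_tdist tdist_triangle[OF ms])
      then show "setdist d D xs - tdist d xs ys \<le> tdist d ys zs" by simp
    qed
    then show ?thesis by simp
  qed
  then show ?thesis using xs ys tdist_commute[OF ms xs ys] by (force simp: abs_le_iff)
qed

lemma subset_tclosure: "Metric_space M d \<Longrightarrow> S \<subseteq> tuples M n \<Longrightarrow> S \<subseteq> tclosure M d n S"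
  unfolding tclosure_def by (auto simp: tdist_self intro!: bexI)

lemma tclosure_subset_tuples: "tclosure M d n S \<subseteq> tuples M n"
  unfolding tclosure_def by auto

lemma tclosure_empty: "tclosure M d n {} = {}"
  unfolding tclosure_def by (auto intro: exI[of _ 1])

lemma tclosure_approx:
  "xs \<in> tclosure M d n S \<Longrightarrow> e > 0 \<Longrightarrow> \<exists>ys\<in>S. tdist d xs ys < e"
  unfolding tclosure_def by blast

lemma tclosure_idem:
  assumes ms: "Metric_space M d" and S: "S \<subseteq> tuples M n"
  shows "tclosure M d n (tclosure M d n S) = tclosure M d n S"
proof
  show "tclosure M d n S \<subseteq> tclosure M d n (tclosure M d n S)"
    by (rule subset_tclosure[OF ms tclosure_subset_tuples])
  show "tclosure M d n (tclosure M d n S) \<subseteq> tclosure M d n S"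
  proof
    fix xs assume xs: "xs \<in> tclosure M d n (tclosure M d n S)"
    have "\<exists>ys\<in>S. tdist d xs ys < e" if "e > 0" for e
    proof -
      obtain zs where zs: "zs \<in> tclosure M d n S" "tdist d xs zs < e / 2"
        using tclosure_approx[OF xs] \<open>e > 0\<close> by (meson half_gt_zero)
      obtain ys where ys: "ys \<in> S" "tdist d zs ys < e / 2"
        using tclosure_approx[OF zs(1)] \<open>e > 0\<close> by (meson half_gt_zero)
      have "tdist d xs ys \<le> tdist d xs zs + tdist d zs ys"
        using xs zs(1) ys(1) S tclosure_subset_tuples by (blast intro: tdist_triangle[OF ms])
      with zs ys show ?thesis by force
    qed
    then show "xs \<in> tclosure M d n S"
      using xs tclosure_subset_tuples unfolding tclosure_def by blast
  qed
qed

lemma setdist_tclosure: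
  assumes ms: "Metric_space M d" and S: "S \<noteq> {}" "S \<subseteq> tuples M n"
    and xs: "xs \<in> tuples M n"
  shows "setdist d (tclosure M d n S) xs = setdist d S xs"
proof (rule antisym)
  show "setdist d (tclosure M d n S) xs \<le> setdist d S xs"
    using subset_tclosure[OF ms S(2)] S(1) by (rule setdist_antimono)
  have "S \<subseteq> tclosure M d n S" by (rule subset_tclosure[OF ms S(2)])
  then show "setdist d S xs \<le> setdist d (tclosure M d n S) xs"
  proof (intro setdist_greatest)
    fix zs assume zs: "zs \<in> tclosure M d n S"
    show "setdist d S xs \<le> tdist d xs zs"
    proof (rule field_le_epsilon)
      fix e :: real assume "e > 0"
      then obtain ys where ys: "ys \<in> S" "tdist d zs ys < e"
        using tclosure_approx[OF zs] by blast
      have "setdist d S xs \<le> tdist d xs ys" by (rule setdist_le_tdist[OF ys(1)])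
      also have "\<dots> \<le> tdist d xs zs + tdist d zs ys"
        using xs zs ys(1) S(2) tclosure_subset_tuples by (blast intro: tdist_triangle[OF ms])
      finally show "setdist d S xs \<le> tdist d xs zs + e" using ys(2) by simp
    qed
  qed (use S(1) in blast)
qed

section \<open>Uniform convergence of the distance predicates\<close>

lemma Dini_decreasing_Lipschitz:
  fixes P :: "nat \<Rightarrow> 'b \<Rightarrow> real" and G :: "'b \<Rightarrow> real" and \<delta> :: "'b \<Rightarrow> 'b \<Rightarrow> real"
  assumes net: "\<And>e. e > 0 \<Longrightarrow> \<exists>N. finite N \<and> N \<subseteq> S \<and> (\<forall>y\<in>S. \<exists>z\<in>N. \<delta> y z < e)"
    and P_Lipschitz: "\<And>k y z. y \<in> S \<Longrightarrow> z \<in> S \<Longrightarrow> \<bar>P k y - P k z\<bar> \<le> \<delta> y z"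
    and G_Lipschitz: "\<And>y z. y \<in> S \<Longrightarrow> z \<in> S \<Longrightarrow> \<bar>G y - G z\<bar> \<le> \<delta> y z"
    and decreasing: "\<And>k m y. k \<le> m \<Longrightarrow> y \<in> S \<Longrightarrow> P m y \<le> P k y"
    and pointwise: "\<And>y e. y \<in> S \<Longrightarrow> e > 0 \<Longrightarrow> \<exists>k. P k y \<le> G y + e"
    and e: "e > 0"
  shows "\<exists>k0. \<forall>k\<ge>k0. \<forall>y\<in>S. P k y \<le> G y + e"
proof -
  obtain N where N: "finite N" "N \<subseteq> S" "\<forall>y\<in>S. \<exists>z\<in>N. \<delta> y z < e / 3"
    using net[of "e / 3"] e by auto
  have "\<forall>z\<in>N. eventually (\<lambda>k. P k z \<le> G z + e / 3) sequentially"
  proof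
    fix z assume "z \<in> N"
    then obtain k where "P k z \<le> G z + e / 3" using pointwise[of z "e / 3"] N(2) e by auto
    then show "eventually (\<lambda>k. P k z \<le> G z + e / 3) sequentially"
      unfolding eventually_sequentially using decreasing \<open>z \<in> N\<close> N(2) by (meson order_trans subsetD)
  qed
  then have "eventually (\<lambda>k. \<forall>z\<in>N. P k z \<le> G z + e / 3) sequentially"
    by (rule eventually_ball_finite[OF N(1)])
  then obtain k0 where k0: "\<And>k z. k \<ge> k0 \<Longrightarrow> z \<in> N \<Longrightarrow> P k z \<le> G z + e / 3"
    unfolding eventually_sequentially by blast
  have "P k y \<le> G y + e" if "k \<ge> k0" "y \<in> S" for k y
  proof -
    obtain z where z: "z \<in> N" "\<delta> y z < e / 3" using N(3) \<open>y \<in> S\<close> by blast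
    have "P k y \<le> P k z + \<delta> y z" using P_Lipschitz[of y z k] z(1) N(2) that(2) by auto
    moreover have "G z \<le> G y + \<delta> y z" using G_Lipschitz[of y z] z(1) N(2) that(2) by auto
    ultimately show ?thesis using k0[OF that(1) z(1)] z(2) by linarith
  qed
  then show ?thesis by blast
qed

lemma uniform_convergence_transfer:
  fixes P :: "nat \<Rightarrow> 'a list \<Rightarrow> real"
  assumes M: "is_structure arf arr M d F R" and El: "elem_substructure arf arr K M d F R"
    and P: "\<And>k. definable_pred arf arr M d F R n (P k)"
    and below: "\<And>k xs. xs \<in> tuples M n \<Longrightarrow> G xs \<le> P k xs"
    and pointwise: "\<And>xs e. xs \<in> tuples M n \<Longrightarrow> e > 0 \<Longrightarrow> \<exists>k. P k xs \<le> G xs + e"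
    and close_on_K: "\<And>ys. ys \<in> tuples K n \<Longrightarrow> P k ys \<le> G ys + e"
    and xs: "xs \<in> tuples M n"
  shows "P k xs \<le> G xs + e"
proof -
  have KM: "tuples K n \<subseteq> tuples M n" by (rule elem_substructure_tuples_subset[OF El])
  have P_le: "P k xs \<le> P m xs + e" for m
  proof (rule definable_pred_le_transfer[OF M El P P _ xs])
    fix ys assume ys: "ys \<in> tuples K n"
    then have "G ys \<le> P m ys" using below[of ys m] KM by blast
    then show "P k ys \<le> P m ys + e" using close_on_K[OF ys] by simp
  qed
  show ?thesis
  proof (rule field_le_epsilon)
    fix \<epsilon> :: real assume "\<epsilon> > 0"
    then obtain m where "P m xs \<le> G xs + \<epsilon>" using pointwise[OF xs] by blast
    with P_le[of m] show "P k xs \<le> G xs + e + \<epsilon>" by simp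
  qed
qed

lemma definable_pred_decreasing_limit:
  fixes P :: "nat \<Rightarrow> 'a list \<Rightarrow> real"
  assumes M: "is_structure arf arr M d F R" and El: "elem_substructure arf arr K M d F R"
    and compact: "compact_space (Metric_space.mtopology K d)"
    and P: "\<And>k. definable_pred arf arr M d F R n (P k)"
    and below: "\<And>k xs. xs \<in> tuples M n \<Longrightarrow> G xs \<le> P k xs"
    and decreasing: "\<And>k m xs. k \<le> m \<Longrightarrow> xs \<in> tuples M n \<Longrightarrow> P m xs \<le> P k xs"
    and pointwise: "\<And>xs e. xs \<in> tuples M n \<Longrightarrow> e > 0 \<Longrightarrow> \<exists>k. P k xs \<le> G xs + e"
    and P_Lipschitz: "\<And>k y z. y \<in> tuples M n \<Longrightarrow> z \<in> tuples M n \<Longrightarrow> \<bar>P k y - P k z\<bar> \<le> tdist d y z"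
    and G_Lipschitz: "\<And>y z. y \<in> tuples M n \<Longrightarrow> z \<in> tuples M n \<Longrightarrow> \<bar>G y - G z\<bar> \<le> tdist d y z"
  shows "definable_pred arf arr M d F R n G"
proof (rule definable_pred_uniform_limit[OF P])
  fix e :: real assume "e > 0"
  have "is_structure arf arr K d F R" using El unfolding elem_substructure_def by blast
  then have msK: "Metric_space K d" by (rule is_structure_Metric_space)
  have KM: "tuples K n \<subseteq> tuples M n" by (rule elem_substructure_tuples_subset[OF El])
  have "\<exists>k0. \<forall>k\<ge>k0. \<forall>ys\<in>tuples K n. P k ys \<le> G ys + e"
  proof (rule Dini_decreasing_Lipschitz[where \<delta> = "tdist d"])
    show "\<exists>N. finite N \<and> N \<subseteq> tuples K n \<and> (\<forall>y\<in>tuples K n. \<exists>z\<in>N. tdist d y z < \<epsilon>)"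
      if "\<epsilon> > 0" for \<epsilon> by (rule finite_net_tuples[OF msK compact that])
    show "\<bar>P k y - P k z\<bar> \<le> tdist d y z" "\<bar>G y - G z\<bar> \<le> tdist d y z"
      if "y \<in> tuples K n" "z \<in> tuples K n" for k y z
      using that KM by (blast intro: P_Lipschitz G_Lipschitz)+
    show "P m y \<le> P k y" if "k \<le> m" "y \<in> tuples K n" for k m y
      using that KM by (blast intro: decreasing)
    show "\<exists>k. P k y \<le> G y + \<epsilon>" if "y \<in> tuples K n" "\<epsilon> > 0" for y \<epsilon>
      using that KM by (blast intro: pointwise)
  qed (rule \<open>e > 0\<close>)
  then obtain k where k: "\<And>ys. ys \<in> tuples K n \<Longrightarrow> P k ys \<le> G ys + e" by blast
  have "\<bar>P k xs - G xs\<bar> \<le> e" if "xs \<in> tuples M n" for xs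
    using uniform_convergence_transfer[OF M El P below pointwise k that] below[OF that, of k]
    by simp
  then show "\<exists>k. \<forall>xs\<in>tuples M n. \<bar>P k xs - G xs\<bar> \<le> e" by blast
qed

lemma setdist_tclosure_Union_approx:
  fixes Ds :: "nat \<Rightarrow> 'a list set"
  assumes ms: "Metric_space M d" and Ds: "\<And>k. Ds k \<noteq> {}" "\<And>k. Ds k \<subseteq> tuples M n"
    and xs: "xs \<in> tuples M n" and "e > 0"
  shows "\<exists>k. setdist d (Ds k) xs \<le> setdist d (tclosure M d n (\<Union>k. Ds k)) xs + e"
proof -
  have U: "(\<Union>k. Ds k) \<noteq> {}" "(\<Union>k. Ds k) \<subseteq> tuples M n"
    using Ds(1)[of 0] Ds(2) by auto
  obtain ys where ys: "ys \<in> (\<Union>k. Ds k)" "tdist d xs ys < setdist d (\<Union>k. Ds k) xs + e"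
    using setdist_approx[OF U(1) \<open>e > 0\<close>] by blast
  then obtain k where "ys \<in> Ds k" by blast
  then have "setdist d (Ds k) xs \<le> tdist d xs ys" by (rule setdist_le_tdist)
  also have "\<dots> \<le> setdist d (tclosure M d n (\<Union>k. Ds k)) xs + e"
    using ys(2) setdist_tclosure[OF ms U xs] by simp
  finally show ?thesis by blast
qed

lemma definable_set_tclosure_increasing_Union:
  assumes M: "is_structure arf arr M d F R" and El: "elem_substructure arf arr K M d F R"
    and compact: "compact_space (Metric_space.mtopology K d)"
    and definable: "\<And>k. definable_set arf arr M d F R n (Ds k)"
    and increasing: "\<And>k. Ds k \<subseteq> Ds (Suc k)" and nonempty: "Ds 0 \<noteq> {}"
  shows "definable_set arf arr M d F R n (tclosure M d n (\<Union>k. Ds k))"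
proof -
  define D where "D = tclosure M d n (\<Union>k. Ds k)"
  have ms: "Metric_space M d" by (rule is_structure_Metric_space[OF M])
  have Ds_tuples: "Ds k \<subseteq> tuples M n" for k
    using definable[of k] unfolding definable_set_def by blast
  have Ds_mono: "k \<le> m \<Longrightarrow> Ds k \<subseteq> Ds m" for k m
    by (rule lift_Suc_mono_le[of Ds, OF increasing])
  have Ds_ne: "Ds k \<noteq> {}" for k using Ds_mono[of 0 k] nonempty by blast
  have U: "(\<Union>k. Ds k) \<subseteq> tuples M n" using Ds_tuples by auto
  have Ds_D: "Ds k \<subseteq> D" for k using subset_tclosure[OF ms U] unfolding D_def by blast
  have D: "D \<noteq> {}" "D \<subseteq> tuples M n"
    using Ds_D[of 0] Ds_ne[of 0] tclosure_subset_tuples unfolding D_def by blast+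
  have "definable_pred arf arr M d F R n (setdist d D)"
  proof (rule definable_pred_decreasing_limit[OF M El compact, where P = "\<lambda>k. setdist d (Ds k)"])
    show "definable_pred arf arr M d F R n (setdist d (Ds k))" for k
      using definable[of k] unfolding definable_set_def by blast
    show "setdist d D xs \<le> setdist d (Ds k) xs" for k xs
      by (rule setdist_antimono[OF Ds_D Ds_ne])
    show "setdist d (Ds m) xs \<le> setdist d (Ds k) xs" if "k \<le> m" for k m xs
      by (rule setdist_antimono[OF Ds_mono[OF that] Ds_ne])
    show "\<exists>k. setdist d (Ds k) xs \<le> setdist d D xs + e" if "xs \<in> tuples M n" "e > 0" for xs e
      unfolding D_def by (rule setdist_tclosure_Union_approx[OF ms Ds_ne Ds_tuples that])
    show "\<bar>setdist d (Ds k) y - setdist d (Ds k) z\<bar> \<le> tdist d y z"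
      if "y \<in> tuples M n" "z \<in> tuples M n" for k y z
      by (rule setdist_Lipschitz[OF ms Ds_ne Ds_tuples that])
    show "\<bar>setdist d D y - setdist d D z\<bar> \<le> tdist d y z"
      if "y \<in> tuples M n" "z \<in> tuples M n" for y z
      by (rule setdist_Lipschitz[OF ms D that])
  qed
  moreover have "tclosure M d n D = D" unfolding D_def by (rule tclosure_idem[OF ms U])
  ultimately show ?thesis using D(2) unfolding definable_set_def D_def by blast
qed

theorem mainTheorem20:
  fixes arf :: "'f \<Rightarrow> nat" and arr :: "'r \<Rightarrow> nat"
    and M K :: "'a set" and d :: "'a \<Rightarrow> 'a \<Rightarrow> real"
    and F :: "'f \<Rightarrow> 'a list \<Rightarrow> 'a" and R :: "'r \<Rightarrow> 'a list \<Rightarrow> real"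
    and n :: nat and Ds :: "nat \<Rightarrow> 'a list set"
  assumes "is_structure arf arr M d F R"
    and "elem_substructure arf arr K M d F R"
    and "compact_space (Metric_space.mtopology K d)"
    and "\<And>k. definable_set arf arr M d F R n (Ds k)"
    and "\<And>k. Ds k \<subseteq> Ds (Suc k)"
  shows "definable_set arf arr M d F R n (tclosure M d n (\<Union>k. Ds k))"
proof (cases "\<forall>k. Ds k = {}")
  case True
  then show ?thesis using assms(4)[of 0] by (simp add: tclosure_empty)
next
  case False
  then obtain j where "Ds j \<noteq> {}" by blast
  have mono: "k \<le> m \<Longrightarrow> Ds k \<subseteq> Ds m" for k m by (rule lift_Suc_mono_le[of Ds, OF assms(5)])
  have "(\<Union>k. Ds (k + j)) = (\<Union>k. Ds k)"
    using mono[of _ "_ + j"] by (auto intro: le_add1)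
  moreover have "definable_set arf arr M d F R n (tclosure M d n (\<Union>k. Ds (k + j)))"
    using assms(5)[of "_ + j"] \<open>Ds j \<noteq> {}\<close>
    by (intro definable_set_tclosure_increasing_Union[OF assms(1-3) assms(4)]) simp_all
  ultimately show ?thesis by simp
qed

end
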